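(* Let $G$ be a reflection subgroup of $G_7$, and let $n$ be the number of distinct reflection conjugacy classes of $G$. Suppose there exists an integer $m\ge n$ such that $G$ is class-searchable at every length greater than $m$, and such that for every $k\in\{1,\dots,m\}$ the following holds: two length-$k$ reflection factorizations that generate $G$ are Hurwitz equivalent if and only if they factor the same element and have the same multiset of conjugacy classes. Then the same statement holds for every length $k\ge 1$.
   Context: Let $G_7$ be the subgroup of $GL_2(\mathbb{C})$ generated by $s=\begin{bmatrix}1&0\\0&-1\end{bmatrix}$, $t=\frac14\begin{bmatrix}(1+\sqrt3)+(-1+\sqrt3)i & (1+\sqrt3)+(-1+\sqrt3)i\\ (-1+\sqrt3)-(1+\sqrt3)i & (1-\sqrt3)+(1+\sqrt3)i\end{bmatrix}$ and $u=t^{\top}$ (presentation $\langle s,t,u\mid s^2=t^3=u^3=1,\ stu=ust=tus\rangle$, order $144$). A reflection is a linear map of $\mathbb{C}^2$ whose fixed space has dimension $1$; a reflection subgroup of $G_7$ is a subgroup generated by reflections of $G_7$, and its reflection conjugacy classes are its conjugacy classes consisting of reflections. A reflection factorization of $g\in G$ of length $k$ is a tuple $(r_1,\dots,r_k)$ of reflections in $G$ with $r_1\cdots r_k=g$; it generates $\langle r_1,\dots,r_k\rangle$, and (when it generates $G$) its multiset of conjugacy classes is the multiset of $G$-conjugacy classes of its entries. The Hurwitz move $\sigma_i$ sends $(r_1,\dots,r_k)$ to $(r_1,\dots,r_{i-1},r_{i+1},r_{i+1}^{-1}r_ir_{i+1},r_{i+2},\dots,r_k)$; two factorizations are Hurwitz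 equivalent if one is obtained from the other by a finite sequence of Hurwitz moves. $G$ is class-searchable at length $k$ if: whenever $T$ is a length-$k$ reflection factorization generating $G$ and $K$ is a reflection conjugacy class of $G$ containing at least two entries of $T$, then for every $x\in K$ there is a factorization $T'$ Hurwitz equivalent to $T$ whose last entry is $x$ and whose first $k-1$ entries generate $G$. *)

theory Defs
  imports "HOL-Analysis.Analysis" "HOL-Library.Multiset"
begin

type_synonym cmat = "complex ^ 2 ^ 2"

definition r3 :: complex where "r3 = complex_of_real (sqrt 3)"

definition mk2 :: "complex \<Rightarrow> complex \<Rightarrow> complex \<Rightarrow> complex \<Rightarrow> cmat" where
  "mk2 a b c d = (\<chi> i j. if i = 1 then (if j = 1 then a else b) else (if j = 1 then c else d))"

definition s7 :: cmat where "s7 = mk2 1 0 0 (-1)"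

definition t7 :: cmat where
  "t7 = (1/4) *\<^sub>R mk2 ((1 + r3) + (-1 + r3) * \<i>) ((1 + r3) + (-1 + r3) * \<i>)
                         ((-1 + r3) - (1 + r3) * \<i>) ((1 - r3) + (1 + r3) * \<i>)"

definition u7 :: cmat where "u7 = transpose t7"

inductive_set gen_grp :: "cmat set \<Rightarrow> cmat set" for S where
  gen_one: "mat 1 \<in> gen_grp S"
| gen_base: "x \<in> S \<Longrightarrow> x \<in> gen_grp S"
| gen_mult: "x \<in> gen_grp S \<Longrightarrow> y \<in> gen_grp S \<Longrightarrow> x ** y \<in> gen_grp S"
| gen_inv: "x \<in> gen_grp S \<Longrightarrow> matrix_inv x \<in> gen_grp S"

definition G7 :: "cmat set" where "G7 = gen_grp {s7, t7, u7}"

definition is_reflection :: "cmat \<Rightarrow> bool" where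
  "is_reflection g \<longleftrightarrow> (\<exists>v::complex^2. v \<noteq> 0 \<and> {w. g *v w = w} = range (\<lambda>c. c *s v))"

definition reflection_subgroup_of_G7 :: "cmat set \<Rightarrow> bool" where
  "reflection_subgroup_of_G7 G \<longleftrightarrow>
     (\<exists>R. R \<subseteq> {r \<in> G7. is_reflection r} \<and> G = gen_grp R)"

definition refls :: "cmat set \<Rightarrow> cmat set" where
  "refls G = {r \<in> G. is_reflection r}"

definition conj_class :: "cmat set \<Rightarrow> cmat \<Rightarrow> cmat set" where
  "conj_class G x = {h ** x ** matrix_inv h | h. h \<in> G}"

definition refl_classes :: "cmat set \<Rightarrow> cmat set set" where
  "refl_classes G = {K. \<exists>x \<in> G. K = conj_class G x \<and> K \<subseteq> refls G}"

definition lprod :: "cmat list \<Rightarrow> cmat" where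
  "lprod T = foldr (**) T (mat 1)"

definition refl_fact :: "cmat set \<Rightarrow> cmat list \<Rightarrow> bool" where
  "refl_fact G T \<longleftrightarrow> set T \<subseteq> refls G"

definition generates :: "cmat set \<Rightarrow> cmat list \<Rightarrow> bool" where
  "generates G T \<longleftrightarrow> gen_grp (set T) = G"

text \<open>Hurwitz move sigma_(i+1), 0-indexed.\<close>
definition hurwitz_move :: "nat \<Rightarrow> cmat list \<Rightarrow> cmat list" where
  "hurwitz_move i T = take i T @ [T ! (i+1), matrix_inv (T ! (i+1)) ** T ! i ** T ! (i+1)] @ drop (i+2) T"

definition hurwitz_step :: "cmat list \<Rightarrow> cmat list \<Rightarrow> bool" where
  "hurwitz_step T T' \<longleftrightarrow> (\<exists>i. i + 1 < length T \<and> T' = hurwitz_move i T)"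

definition hurwitz_equiv :: "cmat list \<Rightarrow> cmat list \<Rightarrow> bool" where
  "hurwitz_equiv = hurwitz_step\<^sup>*\<^sup>*"

definition class_searchable :: "cmat set \<Rightarrow> nat \<Rightarrow> bool" where
  "class_searchable G k \<longleftrightarrow>
     (\<forall>T K. length T = k \<and> refl_fact G T \<and> generates G T \<and> K \<in> refl_classes G
        \<and> card {i. i < k \<and> T ! i \<in> K} \<ge> 2 \<longrightarrow>
        (\<forall>x \<in> K. \<exists>T'. hurwitz_equiv T T' \<and> T' \<noteq> [] \<and> last T' = x
                     \<and> generates G (butlast T')))"

definition hurwitz_classified_at :: "cmat set \<Rightarrow> nat \<Rightarrow> bool" where
  "hurwitz_classified_at G k \<longleftrightarrow>
     (\<forall>T T'. length T = k \<and> length T' = k \<and> refl_fact G T \<and> refl_fact G T'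
        \<and> generates G T \<and> generates G T' \<longrightarrow>
        (hurwitz_equiv T T' \<longleftrightarrow>
           lprod T = lprod T' \<and> mset (map (conj_class G) T) = mset (map (conj_class G) T')))"

end

theory Submission
  imports Defs
begin

(* Among more than n reflections some reflection class must occur twice. Given two generating
   factorizations T, T' of length k + 1 > n with the same product and class multiset,
   class-searchability therefore moves one and the same reflection x into the last position of
   both, leaving generating prefixes P, P'. These again have equal products and class multisets,
   so P and P' are Hurwitz equivalent by induction on k, and T ~ P x ~ P' x ~ T'.
   The last step uses that Hurwitz equivalence is symmetric, which holds because G is finite:
   G7 lies in the product of the 12th roots of unity with the binary tetrahedral group. *)

lemma matrix_inv_right:
  fixes A :: "'a::semiring_1 ^ 'n ^ 'm"
  assumes "invertible A"
  shows "A ** matrix_inv A = mat 1"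
  using someI_ex[OF assms[unfolded invertible_def]] unfolding matrix_inv_def by blast

lemma matrix_inv_left:
  fixes A :: "'a::semiring_1 ^ 'n ^ 'm"
  assumes "invertible A"
  shows "matrix_inv A ** A = mat 1"
  using someI_ex[OF assms[unfolded invertible_def]] unfolding matrix_inv_def by blast

lemma matrix_inv_unique:
  fixes A :: "'a::semiring_1 ^ 'n ^ 'm"
  assumes "A ** B = mat 1" and "B ** A = mat 1"
  shows "matrix_inv A = B"
proof -
  have "invertible A"
    using assms unfolding invertible_def by blast
  then have "matrix_inv A = (B ** A) ** matrix_inv A"
    using assms(2) by simp
  also have "\<dots> = B"
    using \<open>invertible A\<close> by (simp flip: matrix_mul_assoc add: matrix_inv_right)
  finally show ?thesis .
qed

lemma invertible_matrix_inv:
  fixes A :: "'a::semiring_1 ^ 'n ^ 'm"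
  assumes "invertible A"
  shows "invertible (matrix_inv A)"
  using assms matrix_inv_left matrix_inv_right unfolding invertible_def by blast

lemma matrix_inv_matrix_inv:
  fixes A :: "'a::semiring_1 ^ 'n ^ 'm"
  assumes "invertible A"
  shows "matrix_inv (matrix_inv A) = A"
  using assms by (intro matrix_inv_unique) (simp_all add: matrix_inv_left matrix_inv_right)

lemma matrix_inv_mult:
  fixes A :: "'a::semiring_1 ^ 'n ^ 'n" and B :: "'a ^ 'n ^ 'n"
  assumes "invertible A" and "invertible B"
  shows "matrix_inv (A ** B) = matrix_inv B ** matrix_inv A"
proof (rule matrix_inv_unique)
  have "A ** B ** (matrix_inv B ** matrix_inv A) = A ** (B ** matrix_inv B) ** matrix_inv A"
    by (simp add: matrix_mul_assoc)
  then show "A ** B ** (matrix_inv B ** matrix_inv A) = mat 1"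
    using assms by (simp add: matrix_inv_right)
  have "matrix_inv B ** matrix_inv A ** (A ** B) = matrix_inv B ** (matrix_inv A ** A) ** B"
    by (simp add: matrix_mul_assoc)
  then show "matrix_inv B ** matrix_inv A ** (A ** B) = mat 1"
    using assms by (simp add: matrix_inv_left)
qed

lemma matrix_inv_mat_1: "matrix_inv (mat 1 :: 'a::semiring_1 ^ 'n ^ 'n) = mat 1"
  by (rule matrix_inv_unique) simp_all

lemma conj_matrix_inv_cancel:
  fixes g :: "'a::semiring_1 ^ 'n ^ 'n"
  assumes "invertible g"
  shows "g ** (matrix_inv g ** a ** g) ** matrix_inv g = a"
proof -
  have "g ** (matrix_inv g ** a ** g) ** matrix_inv g = (g ** matrix_inv g) ** a ** (g ** matrix_inv g)"
    by (simp add: matrix_mul_assoc)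
  then show ?thesis
    using assms by (simp add: matrix_inv_right)
qed

lemma mult_conj_matrix_inv:
  fixes b :: "'a::semiring_1 ^ 'n ^ 'n"
  assumes "invertible b"
  shows "b ** (matrix_inv b ** a ** b) = a ** b"
proof -
  have "b ** (matrix_inv b ** a ** b) = (b ** matrix_inv b) ** a ** b"
    by (simp add: matrix_mul_assoc)
  then show ?thesis
    using assms by (simp add: matrix_inv_right)
qed

lemma matrix_mult_right_cancel:
  fixes x :: "'a::semiring_1 ^ 'n ^ 'n"
  assumes "invertible x" and "A ** x = B ** x"
  shows "A = B"
proof -
  have "A = A ** x ** matrix_inv x" "B = B ** x ** matrix_inv x"
    using assms(1) by (simp_all flip: matrix_mul_assoc add: matrix_inv_right)
  then show ?thesis
    using assms(2) by simp
qed

lemma fixed_space_conj: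
  fixes g :: "'a::semiring_1 ^ 'n ^ 'n"
  assumes "invertible g"
  shows "{w. (g ** a ** matrix_inv g) *v w = w} = (*v) g ` {w. a *v w = w}"
proof -
  have inv: "matrix_inv g *v (g *v w) = w" "g *v (matrix_inv g *v w) = w" for w
    using assms by (simp_all add: matrix_vector_mul_assoc matrix_inv_left matrix_inv_right)
  show ?thesis
  proof (intro set_eqI iffI)
    fix w
    assume "w \<in> {w. (g ** a ** matrix_inv g) *v w = w}"
    then have "g *v (a *v (matrix_inv g *v w)) = w"
      by (simp add: matrix_vector_mul_assoc matrix_mul_assoc)
    then have "a *v (matrix_inv g *v w) = matrix_inv g *v w"
      using inv(1) by metis
    then show "w \<in> (*v) g ` {w. a *v w = w}"
      using inv(2)[of w] by (metis (mono_tags) image_eqI mem_Collect_eq)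
  next
    fix w
    assume "w \<in> (*v) g ` {w. a *v w = w}"
    then obtain u where "w = g *v u" "a *v u = u"
      by blast
    then show "w \<in> {w. (g ** a ** matrix_inv g) *v w = w}"
      by (simp add: inv flip: matrix_vector_mul_assoc)
  qed
qed

lemma is_reflection_conj:
  assumes "is_reflection a" and "invertible g"
  shows "is_reflection (g ** a ** matrix_inv g)"
proof -
  obtain v where v: "v \<noteq> 0" "{w. a *v w = w} = range (\<lambda>c. c *s v)"
    using assms(1) unfolding is_reflection_def by blast
  have "g *v v \<noteq> 0"
    using v(1) assms(2) inj_matrix_vector_mult[of g] by (metis inj_eq matrix_vector_mult_0_right)
  moreover have "{w. (g ** a ** matrix_inv g) *v w = w} = range (\<lambda>c. c *s (g *v v))"
    unfolding fixed_space_conj[OF assms(2)] v(2) image_image by (simp add: vector_scalar_commute)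
  ultimately show ?thesis
    unfolding is_reflection_def by blast
qed

lemma inj_on_funpow_cycle:
  assumes "finite S" and "f ` S \<subseteq> S" and "inj_on f S" and "x \<in> S"
  obtains n where "n > 0" and "(f ^^ n) x = x"
proof -
  have orbit: "(f ^^ n) x \<in> S" for n
    by (induction n) (use assms(2,4) in auto)
  have "\<not> inj (\<lambda>n. (f ^^ n) x)"
  proof
    assume "inj (\<lambda>n. (f ^^ n) x)"
    moreover have "range (\<lambda>n. (f ^^ n) x) \<subseteq> S"
      using orbit by blast
    ultimately show False
      using assms(1) finite_imageD finite_subset infinite_UNIV_nat by blast
  qed
  then obtain p q where "p \<noteq> q" and "(f ^^ p) x = (f ^^ q) x"
    unfolding inj_def by blast
  then have "\<exists>p d. d > 0 \<and> (f ^^ (p + d)) x = (f ^^ p) x"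
  proof (cases "p < q")
    case True
    then show ?thesis
      using \<open>(f ^^ p) x = (f ^^ q) x\<close> by (intro exI[of _ p] exI[of _ "q - p"]) simp
  next
    case False
    then show ?thesis
      using \<open>p \<noteq> q\<close> \<open>(f ^^ p) x = (f ^^ q) x\<close> by (intro exI[of _ q] exI[of _ "p - q"]) simp
  qed
  then obtain p d where "d > 0" and pd: "(f ^^ (p + d)) x = (f ^^ p) x"
    by blast
  have "(f ^^ d) x = x"
    using pd
  proof (induction p)
    case (Suc p)
    then have "f ((f ^^ (p + d)) x) = f ((f ^^ p) x)"
      by simp
    then show ?case
      using Suc.IH assms(3) orbit unfolding inj_on_def by blast
  qed simp
  then show ?thesis
    using \<open>d > 0\<close> that by blast
qed

lemma pigeonhole_mset_map:
  assumes "finite A" and "f ` set xs \<subseteq> A" and "card A < length xs"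
  obtains a where "a \<in> A" and "2 \<le> count (mset (map f xs)) a"
proof -
  define ys where "ys = map f xs"
  have "card (set ys) < length ys"
    using card_mono[OF assms(1,2)] assms(3) unfolding ys_def by simp
  then have "\<not> distinct ys"
    using distinct_card by fastforce
  then obtain a where "count (mset ys) a \<noteq> (if a \<in> set ys then 1 else 0)"
    unfolding distinct_count_atmost_1 by blast
  moreover from this have "a \<in> set ys"
    by (auto split: if_splits)
  ultimately have "count (mset ys) a \<noteq> 1" and "count (mset ys) a \<noteq> 0"
    by simp_all
  then have "2 \<le> count (mset ys) a"
    by linarith
  then show ?thesis
    using that assms(2) \<open>a \<in> set ys\<close> unfolding ys_def by auto
qed

section \<open>A finite group containing G7\<close>

lemma gen_grp_least:
  assumes "A \<subseteq> S" and "mat 1 \<in> S"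
    and "\<And>x y. x \<in> S \<Longrightarrow> y \<in> S \<Longrightarrow> x ** y \<in> S"
    and "\<And>x. x \<in> S \<Longrightarrow> matrix_inv x \<in> S"
  shows "gen_grp A \<subseteq> S"
proof
  fix x
  assume "x \<in> gen_grp A"
  then show "x \<in> S"
    by (induction rule: gen_grp.induct) (use assms in auto)
qed

lemma gen_grp_subset: "A \<subseteq> gen_grp B \<Longrightarrow> gen_grp A \<subseteq> gen_grp B"
  by (rule gen_grp_least) (auto intro: gen_grp.intros)

type_synonym quat = "int \<times> int \<times> int \<times> int"

fun quat_mult :: "quat \<Rightarrow> quat \<Rightarrow> quat" where
  "quat_mult (a1, b1, c1, d1) (a2, b2, c2, d2) =
    (a1*a2 - b1*b2 - c1*c2 - d1*d2, a1*b2 + b1*a2 + c1*d2 - d1*c2,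
     a1*c2 - b1*d2 + c1*a2 + d1*b2, a1*d2 + b1*c2 - c1*b2 + d1*a2)"

fun quat_cnj :: "quat \<Rightarrow> quat" where
  "quat_cnj (a, b, c, d) = (a, -b, -c, -d)"

fun quat_smult :: "int \<Rightarrow> quat \<Rightarrow> quat" where
  "quat_smult k (a, b, c, d) = (k*a, k*b, k*c, k*d)"

(* mu/2 times the quaternion a + bi + cj + dk in its standard complex 2x2 representation *)
fun quat_mat :: "complex \<Rightarrow> quat \<Rightarrow> cmat" where
  "quat_mat \<mu> (a, b, c, d) =
     mk2 (\<mu> * (of_int a + of_int b * \<i>) / 2) (\<mu> * (of_int c + of_int d * \<i>) / 2)
         (\<mu> * (- of_int c + of_int d * \<i>) / 2) (\<mu> * (of_int a - of_int b * \<i>) / 2)"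

lemma mk2_mult:
  "mk2 a b c d ** mk2 a' b' c' d' = mk2 (a*a' + b*c') (a*b' + b*d') (c*a' + d*c') (c*b' + d*d')"
  unfolding mk2_def matrix_matrix_mult_def by (simp add: vec_eq_iff sum_2 forall_2)

lemma mk2_eq_iff: "mk2 a b c d = mk2 a' b' c' d' \<longleftrightarrow> a = a' \<and> b = b' \<and> c = c' \<and> d = d'"
  unfolding mk2_def by (auto simp: vec_eq_iff forall_2 dest: spec[of _ 1] spec[of _ 2])

lemma scaleR_mk2: "r *\<^sub>R mk2 a b c d = mk2 (r *\<^sub>R a) (r *\<^sub>R b) (r *\<^sub>R c) (r *\<^sub>R d)"
  unfolding mk2_def by (simp add: vec_eq_iff)

lemma transpose_mk2: "transpose (mk2 a b c d) = mk2 a c b d"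
  unfolding mk2_def transpose_def by (simp add: vec_eq_iff forall_2)

lemma mat_1_eq_mk2: "mat 1 = mk2 1 0 0 1"
  unfolding mk2_def mat_def by (simp add: vec_eq_iff forall_2)

lemma quat_mat_mult: "quat_mat \<mu> x ** quat_mat \<nu> y = quat_mat (\<mu> * \<nu> / 2) (quat_mult x y)"
  by (cases x; cases y) (simp add: mk2_mult mk2_eq_iff field_simps)

lemma quat_mat_smult: "quat_mat \<mu> (quat_smult k x) = quat_mat (of_int k * \<mu>) x"
  by (cases x) (simp add: mk2_eq_iff field_simps)

(* The 24 units of the Hurwitz order (the binary tetrahedral group), in doubled coordinates *)
definition hurwitz_units :: "quat list" where
  "hurwitz_units =
     [(2,0,0,0), (-2,0,0,0), (0,2,0,0), (0,-2,0,0), (0,0,2,0), (0,0,-2,0), (0,0,0,2), (0,0,0,-2)] @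
     [(a,b,c,d). a \<leftarrow> [1,-1], b \<leftarrow> [1,-1], c \<leftarrow> [1,-1], d \<leftarrow> [1,-1]]"

lemma hurwitz_units_mult_closed:
  "\<forall>x\<in>set hurwitz_units. \<forall>y\<in>set hurwitz_units. \<exists>z\<in>set hurwitz_units. quat_mult x y = quat_smult 2 z"
  by code_simp

lemma hurwitz_units_cnj:
  "\<forall>x\<in>set hurwitz_units. quat_cnj x \<in> set hurwitz_units
     \<and> quat_mult x (quat_cnj x) = (4,0,0,0) \<and> quat_mult (quat_cnj x) x = (4,0,0,0)"
  by code_simp

(* The product of the 12th roots of unity with the binary tetrahedral group, of order 144 *)
definition G7_envelope :: "cmat set" where
  "G7_envelope = (\<lambda>(\<mu>, x). quat_mat \<mu> x) ` ({\<mu>. \<mu> ^ 12 = 1} \<times> set hurwitz_units)"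

lemma quat_mat_in_G7_envelope:
  "\<mu> ^ 12 = 1 \<Longrightarrow> x \<in> set hurwitz_units \<Longrightarrow> quat_mat \<mu> x \<in> G7_envelope"
  unfolding G7_envelope_def by (auto intro: image_eqI[of _ _ "(\<mu>, x)"])

lemma G7_envelopeE:
  assumes "A \<in> G7_envelope"
  obtains \<mu> x where "A = quat_mat \<mu> x" "\<mu> ^ 12 = 1" "x \<in> set hurwitz_units"
  using assms unfolding G7_envelope_def by auto

lemma finite_G7_envelope: "finite G7_envelope"
  unfolding G7_envelope_def by (intro finite_imageI finite_cartesian_product finite_roots_unity) auto

lemma G7_envelope_mult_closed:
  assumes "A \<in> G7_envelope" and "B \<in> G7_envelope"
  shows "A ** B \<in> G7_envelope"
proof -
  obtain \<mu> x where A: "A = quat_mat \<mu> x" "\<mu> ^ 12 = 1" "x \<in> set hurwitz_units"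
    using assms(1) by (rule G7_envelopeE)
  obtain \<nu> y where B: "B = quat_mat \<nu> y" "\<nu> ^ 12 = 1" "y \<in> set hurwitz_units"
    using assms(2) by (rule G7_envelopeE)
  obtain z where z: "z \<in> set hurwitz_units" "quat_mult x y = quat_smult 2 z"
    using hurwitz_units_mult_closed A(3) B(3) by blast
  have "A ** B = quat_mat (\<mu> * \<nu>) z"
    by (simp add: A(1) B(1) quat_mat_mult z(2) quat_mat_smult)
  moreover have "(\<mu> * \<nu>) ^ 12 = 1"
    using A(2) B(2) by (simp add: power_mult_distrib)
  ultimately show ?thesis
    using quat_mat_in_G7_envelope z(1) by simp
qed

lemma G7_envelope_inverse:
  assumes "A \<in> G7_envelope"
  shows "invertible A" and "matrix_inv A \<in> G7_envelope"
proof -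
  obtain \<mu> x where A: "A = quat_mat \<mu> x" "\<mu> ^ 12 = 1" "x \<in> set hurwitz_units"
    using assms by (rule G7_envelopeE)
  define B where "B = quat_mat (\<mu> ^ 11) (quat_cnj x)"
  have "(\<mu> ^ 11) ^ 12 = 1"
    using A(2) by (metis power_mult mult.commute power_one)
  then have "B \<in> G7_envelope"
    unfolding B_def using A(3) hurwitz_units_cnj by (simp add: quat_mat_in_G7_envelope)
  have "\<mu> * \<mu> ^ 11 = 1"
    using A(2) by (simp flip: power_Suc)
  then have "A ** B = mat 1" "B ** A = mat 1"
    using A(3) hurwitz_units_cnj
    by (simp_all add: A(1) B_def quat_mat_mult mult.commute mk2_eq_iff mat_1_eq_mk2)
  then show "invertible A" and "matrix_inv A \<in> G7_envelope"
    using \<open>B \<in> G7_envelope\<close> matrix_inv_unique unfolding invertible_def by auto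
qed

lemma r3_squared: "r3 * r3 = 3"
  unfolding r3_def by (simp flip: of_real_mult)

lemma sixth_root_of_unity_power_12: "((1 + r3 * \<i>) / 2) ^ 12 = 1"
proof -
  define \<zeta> where "\<zeta> = (1 + r3 * \<i>) / 2"
  have "\<zeta> * \<zeta> = \<zeta> - 1"
    unfolding \<zeta>_def by (simp add: field_simps r3_squared)
  have "\<zeta> ^ 3 = (\<zeta> * \<zeta>) * \<zeta>"
    by (simp add: power3_eq_cube)
  also have "\<dots> = (\<zeta> - 1) * \<zeta>"
    unfolding \<open>\<zeta> * \<zeta> = \<zeta> - 1\<close> ..
  also have "\<dots> = \<zeta> * \<zeta> - \<zeta>"
    by (simp add: algebra_simps)
  also have "\<dots> = -1"
    unfolding \<open>\<zeta> * \<zeta> = \<zeta> - 1\<close> by simp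
  finally have "\<zeta> ^ 3 = -1" .
  have "\<zeta> ^ 12 = (\<zeta> ^ 3) ^ 4"
    by (simp flip: power_mult)
  then have "\<zeta> ^ 12 = 1"
    unfolding \<open>\<zeta> ^ 3 = -1\<close> by simp
  then show ?thesis
    unfolding \<zeta>_def .
qed

lemma generators_in_G7_envelope: "{s7, t7, u7} \<subseteq> G7_envelope"
proof -
  have "\<i> ^ 12 = 1"
    using i_even_power[of 6] by (simp del: i_even_power i_even_power')
  then have "quat_mat \<i> (0, -2, 0, 0) \<in> G7_envelope"
    by (rule quat_mat_in_G7_envelope) (simp add: hurwitz_units_def)
  moreover have "s7 = quat_mat \<i> (0, -2, 0, 0)"
    unfolding s7_def by (simp add: mk2_eq_iff)
  moreover have "quat_mat ((1 + r3 * \<i>) / 2) (1, -1, 1, -1) \<in> G7_envelope"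
    by (rule quat_mat_in_G7_envelope[OF sixth_root_of_unity_power_12]) (simp add: hurwitz_units_def)
  moreover have "t7 = quat_mat ((1 + r3 * \<i>) / 2) (1, -1, 1, -1)"
    unfolding t7_def scaleR_mk2 by (simp add: mk2_eq_iff scaleR_conv_of_real field_simps)
  moreover have "quat_mat ((1 + r3 * \<i>) / 2) (1, -1, -1, -1) \<in> G7_envelope"
    by (rule quat_mat_in_G7_envelope[OF sixth_root_of_unity_power_12]) (simp add: hurwitz_units_def)
  moreover have "u7 = quat_mat ((1 + r3 * \<i>) / 2) (1, -1, -1, -1)"
    unfolding u7_def t7_def scaleR_mk2 transpose_mk2 by (simp add: mk2_eq_iff scaleR_conv_of_real field_simps)
  ultimately show ?thesis
    by (simp only: insert_subset empty_subsetI)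
qed

lemma G7_subset_G7_envelope: "G7 \<subseteq> G7_envelope"
  unfolding G7_def
  using generators_in_G7_envelope quat_mat_in_G7_envelope[of 1 "(2,0,0,0)"]
  by (intro gen_grp_least) (auto simp: G7_envelope_mult_closed G7_envelope_inverse mat_1_eq_mk2 hurwitz_units_def)

lemma finite_G7: "finite G7"
  using finite_subset[OF G7_subset_G7_envelope finite_G7_envelope] .

lemma invertible_if_in_G7: "g \<in> G7 \<Longrightarrow> invertible g"
  using G7_subset_G7_envelope G7_envelope_inverse(1) by blast

section \<open>Hurwitz moves\<close>

lemma take_nth_nth_drop: "i + 1 < length T \<Longrightarrow> take i T @ T ! i # T ! (i + 1) # drop (i + 2) T = T"
  by (metis Cons_nth_drop_Suc Suc_eq_plus1 Suc_lessD add_2_eq_Suc' append_take_drop_id)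

lemma hurwitz_move_append: "hurwitz_move (length xs) (xs @ a # b # ys) = xs @ b # (matrix_inv b ** a ** b) # ys"
  unfolding hurwitz_move_def by (simp add: nth_append)

lemma hurwitz_step_iff:
  "hurwitz_step T T' \<longleftrightarrow> (\<exists>xs a b ys. T = xs @ a # b # ys \<and> T' = xs @ b # (matrix_inv b ** a ** b) # ys)"
proof
  assume "hurwitz_step T T'"
  then obtain i where i: "i + 1 < length T" "T' = hurwitz_move i T"
    unfolding hurwitz_step_def by blast
  from i(1) have "T = take i T @ T ! i # T ! (i + 1) # drop (i + 2) T"
    by (rule take_nth_nth_drop[symmetric])
  moreover have "length (take i T) = i"
    using i(1) by simp
  ultimately show "\<exists>xs a b ys. T = xs @ a # b # ys \<and> T' = xs @ b # (matrix_inv b ** a ** b) # ys"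
    using i(2) hurwitz_move_append by metis
next
  assume "\<exists>xs a b ys. T = xs @ a # b # ys \<and> T' = xs @ b # (matrix_inv b ** a ** b) # ys"
  then obtain xs a b ys where "T = xs @ a # b # ys" "T' = xs @ b # (matrix_inv b ** a ** b) # ys"
    by blast
  then show "hurwitz_step T T'"
    unfolding hurwitz_step_def by (intro exI[of _ "length xs"]) (simp add: hurwitz_move_append)
qed

definition hurwitz_move_inv :: "nat \<Rightarrow> cmat list \<Rightarrow> cmat list" where
  "hurwitz_move_inv i T = take i T @ [T ! i ** T ! (i+1) ** matrix_inv (T ! i), T ! i] @ drop (i+2) T"

lemma hurwitz_move_inv_hurwitz_move:
  assumes "i + 1 < length T" and "invertible (T ! (i + 1))"
  shows "hurwitz_move_inv i (hurwitz_move i T) = T"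
proof -
  let ?a = "T ! i" and ?b = "T ! (i + 1)"
  have "hurwitz_move_inv i (hurwitz_move i T)
      = take i T @ [?b ** (matrix_inv ?b ** ?a ** ?b) ** matrix_inv ?b, ?b] @ drop (i + 2) T"
    using assms(1) by (simp add: hurwitz_move_inv_def hurwitz_move_def nth_append)
  also have "\<dots> = take i T @ ?a # ?b # drop (i + 2) T"
    using assms(2) by (simp add: conj_matrix_inv_cancel)
  also have "\<dots> = T"
    using assms(1) by (rule take_nth_nth_drop)
  finally show ?thesis .
qed

lemma hurwitz_equiv_snoc: "hurwitz_equiv T T' \<Longrightarrow> hurwitz_equiv (T @ [x]) (T' @ [x])"
  unfolding hurwitz_equiv_def
proof (induction rule: rtranclp_induct)
  case (step U U')
  then have "hurwitz_step (U @ [x]) (U' @ [x])"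
    unfolding hurwitz_step_iff by fastforce
  then show ?case
    using step.IH by simp
qed simp

lemma hurwitz_equiv_subset:
  assumes closed: "\<And>a b. a \<in> S \<Longrightarrow> b \<in> S \<Longrightarrow> matrix_inv b ** a ** b \<in> S"
    and "hurwitz_equiv T T'" and "set T \<subseteq> S"
  shows "set T' \<subseteq> S"
  using assms(2)[unfolded hurwitz_equiv_def] assms(3)
  by (induction rule: rtranclp_induct) (auto simp: hurwitz_step_iff closed)

lemma hurwitz_equiv_invariant:
  assumes closed: "\<And>a b. a \<in> S \<Longrightarrow> b \<in> S \<Longrightarrow> matrix_inv b ** a ** b \<in> S"
    and step: "\<And>U U'. hurwitz_step U U' \<Longrightarrow> set U \<subseteq> S \<Longrightarrow> f U' = f U"
    and "hurwitz_equiv T T'" and "set T \<subseteq> S"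
  shows "f T' = f T"
  using assms(3)[unfolded hurwitz_equiv_def]
proof (induction rule: rtranclp_induct)
  case (step U U')
  have "set U \<subseteq> S"
    using hurwitz_equiv_subset[OF closed _ assms(4)] step.hyps(1) unfolding hurwitz_equiv_def by blast
  then show ?case
    using step.IH assms(2)[OF step.hyps(2)] by simp
qed simp

lemma lprod_append: "lprod (xs @ ys) = lprod xs ** lprod ys"
  unfolding lprod_def by (induction xs) (simp_all add: matrix_mul_assoc)

lemma lprod_singleton: "lprod [x] = x"
  unfolding lprod_def by simp

lemma hurwitz_classified_at_0: "hurwitz_classified_at G 0"
  unfolding hurwitz_classified_at_def hurwitz_equiv_def by simp

section \<open>Finite groups of matrices\<close>

locale matrix_group =
  fixes G :: "cmat set"
  assumes one_closed: "mat 1 \<in> G"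
    and mult_closed: "x \<in> G \<Longrightarrow> y \<in> G \<Longrightarrow> x ** y \<in> G"
    and inv_closed: "x \<in> G \<Longrightarrow> matrix_inv x \<in> G"
    and elem_invertible: "x \<in> G \<Longrightarrow> invertible x"

locale finite_matrix_group = matrix_group +
  assumes finite_carrier: "finite G"

lemma matrix_group_gen_grp:
  assumes "\<And>r. r \<in> R \<Longrightarrow> invertible r"
  shows "matrix_group (gen_grp R)"
proof
  show "invertible x" if "x \<in> gen_grp R" for x
    using that
  proof (induction rule: gen_grp.induct)
    case gen_one
    show ?case
      unfolding invertible_def by (intro exI[of _ "mat 1"]) simp
  qed (use assms invertible_mult invertible_matrix_inv in auto)
qed (auto intro: gen_grp.intros)

lemma finite_matrix_group_gen_grp_G7:
  assumes "R \<subseteq> G7"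
  shows "finite_matrix_group (gen_grp R)"
proof -
  have "gen_grp R \<subseteq> G7"
    using assms unfolding G7_def by (rule gen_grp_subset)
  then show ?thesis
    using assms matrix_group_gen_grp[of R] finite_G7 invertible_if_in_G7
    by (simp add: finite_matrix_group_def finite_matrix_group_axioms_def finite_subset subset_iff)
qed

context matrix_group
begin

lemma conj_closed: "g \<in> G \<Longrightarrow> a \<in> G \<Longrightarrow> g ** a ** matrix_inv g \<in> G"
  by (simp add: mult_closed inv_closed)

lemma inv_conj_closed: "a \<in> G \<Longrightarrow> b \<in> G \<Longrightarrow> matrix_inv b ** a ** b \<in> G"
  by (simp add: mult_closed inv_closed)

lemma inv_conj_eq_conj:
  assumes "b \<in> G"
  shows "matrix_inv b ** a ** b = matrix_inv b ** a ** matrix_inv (matrix_inv b)"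
  using assms by (simp add: elem_invertible matrix_inv_matrix_inv)

lemma conj_class_conj_subset:
  assumes "g \<in> G"
  shows "conj_class G (g ** a ** matrix_inv g) \<subseteq> conj_class G a"
proof
  fix z
  assume "z \<in> conj_class G (g ** a ** matrix_inv g)"
  then obtain h where h: "h \<in> G" "z = h ** (g ** a ** matrix_inv g) ** matrix_inv h"
    unfolding conj_class_def by blast
  then have "z = (h ** g) ** a ** matrix_inv (h ** g)"
    using assms by (simp add: matrix_inv_mult elem_invertible matrix_mul_assoc)
  then show "z \<in> conj_class G a"
    unfolding conj_class_def using h(1) assms mult_closed by blast
qed

lemma conj_class_conj:
  assumes "g \<in> G"
  shows "conj_class G (g ** a ** matrix_inv g) = conj_class G a"
proof
  have "matrix_inv g ** (g ** a ** matrix_inv g) ** matrix_inv (matrix_inv g) = a"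
    using conj_matrix_inv_cancel[of "matrix_inv g"] assms
    by (simp add: elem_invertible invertible_matrix_inv matrix_inv_matrix_inv)
  then show "conj_class G a \<subseteq> conj_class G (g ** a ** matrix_inv g)"
    using conj_class_conj_subset[of "matrix_inv g"] assms inv_closed by metis
qed (rule conj_class_conj_subset[OF assms])

lemma mem_conj_class_self: "x \<in> conj_class G x"
  unfolding conj_class_def using one_closed by (force simp: matrix_inv_mat_1)

lemma conj_class_eq_iff_mem:
  assumes "x \<in> G" and "y \<in> G"
  shows "conj_class G x = conj_class G y \<longleftrightarrow> x \<in> conj_class G y"
proof
  assume "x \<in> conj_class G y"
  then obtain h where "h \<in> G" "x = h ** y ** matrix_inv h"
    unfolding conj_class_def by blast
  then show "conj_class G x = conj_class G y"
    using conj_class_conj assms(2) by simp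
qed (use mem_conj_class_self in blast)

lemma refls_conj_closed:
  assumes "g \<in> G" and "a \<in> refls G"
  shows "g ** a ** matrix_inv g \<in> refls G"
  using assms is_reflection_conj conj_closed elem_invertible unfolding refls_def by blast

lemma conj_class_in_refl_classes:
  assumes "x \<in> refls G"
  shows "conj_class G x \<in> refl_classes G"
proof -
  have "conj_class G x \<subseteq> refls G"
    unfolding conj_class_def using assms refls_conj_closed by blast
  then show ?thesis
    unfolding refl_classes_def using assms refls_def by blast
qed

lemma card_positions_in_conj_class:
  assumes "y \<in> G" and "set L \<subseteq> G"
  shows "card {i. i < length L \<and> L ! i \<in> conj_class G y} = count (mset (map (conj_class G) L)) (conj_class G y)"
proof -
  have "count (mset (map (conj_class G) L)) (conj_class G y) = length (filter (\<lambda>x. conj_class G x = conj_class G y) L)"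
    by (induction L) auto
  also have "\<dots> = card {i. i < length L \<and> conj_class G (L ! i) = conj_class G y}"
    by (rule length_filter_conv_card)
  also have "\<dots> = card {i. i < length L \<and> L ! i \<in> conj_class G y}"
    using assms conj_class_eq_iff_mem[of "L ! _" y] nth_mem
    by (intro arg_cong[of _ _ card] Collect_cong) blast
  finally show ?thesis ..
qed

lemma hurwitz_step_invariants:
  assumes "hurwitz_step U U'" and "set U \<subseteq> G"
  shows "length U' = length U"
    and "lprod U' = lprod U"
    and "mset (map (conj_class G) U') = mset (map (conj_class G) U)"
    and "gen_grp (set U') = gen_grp (set U)"
proof -
  obtain xs a b ys where U: "U = xs @ a # b # ys" and U': "U' = xs @ b # (matrix_inv b ** a ** b) # ys"
    using assms(1) hurwitz_step_iff by blast
  have "a \<in> G" "b \<in> G"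
    using assms(2) U by auto
  show "length U' = length U"
    unfolding U U' by simp
  have "b ** (matrix_inv b ** a ** b) ** lprod ys = a ** b ** lprod ys"
    using \<open>b \<in> G\<close> by (simp add: elem_invertible mult_conj_matrix_inv)
  then show "lprod U' = lprod U"
    unfolding U U' lprod_def by (simp add: matrix_mul_assoc)
  have "conj_class G (matrix_inv b ** a ** b) = conj_class G a"
    unfolding inv_conj_eq_conj[OF \<open>b \<in> G\<close>] using \<open>b \<in> G\<close> by (simp add: conj_class_conj inv_closed)
  then show "mset (map (conj_class G) U') = mset (map (conj_class G) U)"
    unfolding U U' by (simp add: add_mset_commute)
  have "b \<in> gen_grp (set U')" "matrix_inv b ** a ** b \<in> gen_grp (set U')"
    unfolding U' by (auto intro: gen_grp.gen_base)
  then have "b ** (matrix_inv b ** a ** b) ** matrix_inv b \<in> gen_grp (set U')"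
    by (blast intro: gen_grp.gen_mult gen_grp.gen_inv)
  then have "a \<in> gen_grp (set U')"
    using \<open>b \<in> G\<close> by (simp add: elem_invertible conj_matrix_inv_cancel)
  then have "set U \<subseteq> gen_grp (set U')"
    unfolding U U' by (auto intro: gen_grp.gen_base)
  moreover
  have "a \<in> gen_grp (set U)" "b \<in> gen_grp (set U)"
    unfolding U by (auto intro: gen_grp.gen_base)
  then have "matrix_inv b ** a ** b \<in> gen_grp (set U)"
    by (blast intro: gen_grp.gen_mult gen_grp.gen_inv)
  then have "set U' \<subseteq> gen_grp (set U)"
    unfolding U U' by (auto intro: gen_grp.gen_base)
  ultimately show "gen_grp (set U') = gen_grp (set U)"
    by (simp add: gen_grp_subset subset_antisym)
qed

lemma hurwitz_equiv_invariants:
  assumes "hurwitz_equiv T T'" and "set T \<subseteq> G"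
  shows "length T' = length T"
    and "lprod T' = lprod T"
    and "mset (map (conj_class G) T') = mset (map (conj_class G) T)"
    and "gen_grp (set T') = gen_grp (set T)"
proof -
  note invariant = hurwitz_equiv_invariant[where S = G, OF _ _ assms]
  show "length T' = length T"
    by (rule invariant[where f = length]) (simp_all add: inv_conj_closed hurwitz_step_invariants)
  show "lprod T' = lprod T"
    by (rule invariant[where f = lprod]) (simp_all add: inv_conj_closed hurwitz_step_invariants)
  show "mset (map (conj_class G) T') = mset (map (conj_class G) T)"
    by (rule invariant[where f = "\<lambda>U. mset (map (conj_class G) U)"])
      (simp_all add: inv_conj_closed hurwitz_step_invariants del: mset_map)
  show "gen_grp (set T') = gen_grp (set T)"
    by (rule invariant[where f = "\<lambda>U. gen_grp (set U)"])
      (simp_all add: inv_conj_closed hurwitz_step_invariants)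
qed

lemma hurwitz_equiv_refl_fact:
  assumes "hurwitz_equiv T T'" and "refl_fact G T"
  shows "refl_fact G T'"
proof -
  have "matrix_inv b ** a ** b \<in> refls G" if "a \<in> refls G" "b \<in> refls G" for a b
  proof -
    have "b \<in> G"
      using that(2) unfolding refls_def by blast
    then show ?thesis
      unfolding inv_conj_eq_conj[OF \<open>b \<in> G\<close>] using that(1) by (simp add: refls_conj_closed inv_closed)
  qed
  then show ?thesis
    using hurwitz_equiv_subset assms unfolding refl_fact_def by blast
qed

lemma hurwitz_equiv_snoc_invariants:
  assumes "hurwitz_equiv T (P @ [x])" and "refl_fact G T"
  shows "length T = Suc (length P)"
    and "refl_fact G P" and "x \<in> G"
    and "lprod T = lprod P ** x"
    and "mset (map (conj_class G) T) = add_mset (conj_class G x) (mset (map (conj_class G) P))"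
proof -
  have "refl_fact G (P @ [x])"
    using assms by (rule hurwitz_equiv_refl_fact)
  then show "refl_fact G P" and "x \<in> G"
    unfolding refl_fact_def refls_def by auto
  have "set T \<subseteq> G"
    using assms(2) unfolding refl_fact_def refls_def by auto
  show "length T = Suc (length P)"
    using hurwitz_equiv_invariants(1)[OF assms(1) \<open>set T \<subseteq> G\<close>] by simp
  show "lprod T = lprod P ** x"
    using hurwitz_equiv_invariants(2)[OF assms(1) \<open>set T \<subseteq> G\<close>] by (simp add: lprod_append lprod_singleton)
  show "mset (map (conj_class G) T) = add_mset (conj_class G x) (mset (map (conj_class G) P))"
    using hurwitz_equiv_invariants(3)[OF assms(1) \<open>set T \<subseteq> G\<close>] by simp
qed

lemma class_searchable_prefix:
  assumes "class_searchable G (length T)" and "refl_fact G T" and "generates G T"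
    and "K \<in> refl_classes G" and "2 \<le> count (mset (map (conj_class G) T)) K" and "x \<in> K"
  obtains P where "hurwitz_equiv T (P @ [x])" and "generates G P"
proof -
  obtain y where "y \<in> G" and K: "K = conj_class G y"
    using assms(4) unfolding refl_classes_def by blast
  have "set T \<subseteq> G"
    using assms(2) unfolding refl_fact_def refls_def by blast
  then have "2 \<le> card {i. i < length T \<and> T ! i \<in> K}"
    using assms(5) card_positions_in_conj_class[OF \<open>y \<in> G\<close>] K by simp
  then obtain T' where "hurwitz_equiv T T'" "T' \<noteq> []" "last T' = x" "generates G (butlast T')"
    using assms unfolding class_searchable_def by blast
  then show ?thesis
    using that[of "butlast T'"] append_butlast_last_id by metis
qed

end

context finite_matrix_group
begin

lemma finite_refl_classes: "finite (refl_classes G)"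
proof (rule finite_subset)
  show "refl_classes G \<subseteq> Pow G"
    unfolding refl_classes_def refls_def by blast
qed (use finite_carrier in simp)

(* Hurwitz equivalence is generated by forward moves only; the inverse of a move is obtained as
   a power of it, since the move permutes the finite set of tuples over G of a given length. *)
lemma hurwitz_step_reverse:
  assumes "hurwitz_step T T'" and "set T \<subseteq> G"
  shows "hurwitz_equiv T' T"
proof -
  obtain i where i: "i + 1 < length T" and T': "T' = hurwitz_move i T"
    using assms(1) unfolding hurwitz_step_def by blast
  define S where "S = {L. set L \<subseteq> G \<and> length L = length T}"
  have step: "hurwitz_step L (hurwitz_move i L)" if "L \<in> S" for L
    using that i unfolding S_def hurwitz_step_def by auto
  have maps_to: "hurwitz_move i ` S \<subseteq> S"
  proof
    fix L'
    assume "L' \<in> hurwitz_move i ` S"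
    then obtain L where L: "L \<in> S" "L' = hurwitz_move i L"
      by blast
    then have "set L' \<subseteq> G"
      using hurwitz_equiv_subset[OF inv_conj_closed] step unfolding S_def hurwitz_equiv_def by blast
    moreover have "length L' = length L"
      using hurwitz_step_invariants(1) step L unfolding S_def by blast
    ultimately show "L' \<in> S"
      using L(1) unfolding S_def by simp
  qed
  have "inj_on (hurwitz_move i) S"
  proof (rule inj_on_inverseI)
    fix L
    assume "L \<in> S"
    then have "i + 1 < length L" and "L ! (i + 1) \<in> G"
      using i nth_mem[of "i + 1" L] unfolding S_def by auto
    then show "hurwitz_move_inv i (hurwitz_move i L) = L"
      by (simp add: hurwitz_move_inv_hurwitz_move elem_invertible)
  qed
  moreover have "finite S"
    unfolding S_def using finite_carrier by (rule finite_lists_length_eq)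
  moreover have "T \<in> S"
    unfolding S_def using assms(2) by simp
  ultimately obtain n where "n > 0" and cycle: "(hurwitz_move i ^^ n) T = T"
    using inj_on_funpow_cycle[OF _ maps_to] by blast
  then obtain m where "n = Suc m"
    using gr0_implies_Suc by blast
  then have "(hurwitz_move i ^^ m) T' = T"
    using cycle unfolding T' by (simp add: funpow_swap1)
  moreover have "hurwitz_equiv L ((hurwitz_move i ^^ k) L)" if "L \<in> S" for L k
  proof (induction k)
    case (Suc k)
    have "(hurwitz_move i ^^ k) L \<in> S"
      using that maps_to by (induction k) auto
    then show ?case
      using Suc.IH step unfolding hurwitz_equiv_def by (simp add: rtranclp.rtrancl_into_rtrancl)
  qed (simp add: hurwitz_equiv_def)
  moreover have "T' \<in> S"
    using maps_to \<open>T \<in> S\<close> T' by blast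
  ultimately show ?thesis
    by blast
qed

lemma hurwitz_equiv_sym:
  assumes "hurwitz_equiv T T'" and "set T \<subseteq> G"
  shows "hurwitz_equiv T' T"
  using assms(1)[unfolded hurwitz_equiv_def]
proof (induction rule: rtranclp_induct)
  case (step U U')
  have "set U \<subseteq> G"
    using hurwitz_equiv_subset[OF inv_conj_closed] step.hyps(1) assms(2) unfolding hurwitz_equiv_def by blast
  then have "hurwitz_equiv U' U"
    using hurwitz_step_reverse step.hyps(2) by blast
  then show ?case
    using step.IH unfolding hurwitz_equiv_def by simp
qed (simp add: hurwitz_equiv_def)

lemma hurwitz_equiv_if_common_last:
  assumes "hurwitz_classified_at G k"
    and "hurwitz_equiv T (P @ [x])" and "hurwitz_equiv T' (P' @ [x])"
    and "length T = Suc k" and "length T' = Suc k"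
    and "refl_fact G T" and "refl_fact G T'" and "generates G P" and "generates G P'"
    and "lprod T = lprod T'" and "mset (map (conj_class G) T) = mset (map (conj_class G) T')"
  shows "hurwitz_equiv T T'"
proof -
  note P = hurwitz_equiv_snoc_invariants[OF assms(2,6)]
  note P' = hurwitz_equiv_snoc_invariants[OF assms(3,7)]
  have "lprod P = lprod P'"
    using assms(10) P(3,4) P'(4) elem_invertible matrix_mult_right_cancel by metis
  moreover have "mset (map (conj_class G) P) = mset (map (conj_class G) P')"
    using assms(11) P(5) P'(5) by simp
  ultimately have "hurwitz_equiv P P'"
    using assms(1,4,5,8,9) P(1,2) P'(1,2) unfolding hurwitz_classified_at_def by auto
  then have "hurwitz_equiv (P @ [x]) (P' @ [x])"
    by (rule hurwitz_equiv_snoc)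
  moreover have "hurwitz_equiv (P' @ [x]) T'"
    using hurwitz_equiv_sym assms(3,7) unfolding refl_fact_def refls_def by blast
  ultimately show ?thesis
    using assms(2) unfolding hurwitz_equiv_def by simp
qed

lemma hurwitz_classified_at_Suc:
  assumes "card (refl_classes G) \<le> k" and "class_searchable G (Suc k)" and "hurwitz_classified_at G k"
  shows "hurwitz_classified_at G (Suc k)"
  unfolding hurwitz_classified_at_def
proof (intro allI impI)
  fix T T'
  assume "length T = Suc k \<and> length T' = Suc k \<and> refl_fact G T \<and> refl_fact G T'
    \<and> generates G T \<and> generates G T'"
  then have len: "length T = Suc k" "length T' = Suc k" and rf: "refl_fact G T" "refl_fact G T'"
    and gen: "generates G T" "generates G T'"
    by auto
  have "set T \<subseteq> G"
    using rf(1) unfolding refl_fact_def refls_def by blast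
  show "hurwitz_equiv T T' \<longleftrightarrow>
    lprod T = lprod T' \<and> mset (map (conj_class G) T) = mset (map (conj_class G) T')"
  proof
    assume "hurwitz_equiv T T'"
    then show "lprod T = lprod T' \<and> mset (map (conj_class G) T) = mset (map (conj_class G) T')"
      using hurwitz_equiv_invariants(2,3) \<open>set T \<subseteq> G\<close> by metis
  next
    assume same: "lprod T = lprod T' \<and> mset (map (conj_class G) T) = mset (map (conj_class G) T')"
    have "conj_class G ` set T \<subseteq> refl_classes G"
      using rf(1) conj_class_in_refl_classes unfolding refl_fact_def by blast
    then obtain K where K: "K \<in> refl_classes G" "2 \<le> count (mset (map (conj_class G) T)) K"
      using pigeonhole_mset_map[OF finite_refl_classes] assms(1) len(1) by (metis less_Suc_eq_le)
    then obtain x where "x \<in> K"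
      unfolding refl_classes_def using mem_conj_class_self by blast
    obtain P where "hurwitz_equiv T (P @ [x])" "generates G P"
      using class_searchable_prefix[OF _ rf(1) gen(1) K \<open>x \<in> K\<close>] assms(2) len(1) by auto
    moreover obtain P' where "hurwitz_equiv T' (P' @ [x])" "generates G P'"
      using class_searchable_prefix[OF _ rf(2) gen(2) K(1) _ \<open>x \<in> K\<close>] K(2) same assms(2) len(2) by auto
    ultimately show "hurwitz_equiv T T'"
      using hurwitz_equiv_if_common_last assms(3) len rf same by blast
  qed
qed

end

theorem lemma3p18:
  fixes G :: "cmat set" and n m :: nat
  assumes "reflection_subgroup_of_G7 G"
    and "n = card (refl_classes G)"
    and "m \<ge> n"
    and "\<forall>k > m. class_searchable G k"
    and "\<forall>k \<in> {1..m}. hurwitz_classified_at G k"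
  shows "\<forall>k \<ge> 1. hurwitz_classified_at G k"
proof -
  obtain R where "R \<subseteq> {r \<in> G7. is_reflection r}" and "G = gen_grp R"
    using assms(1) unfolding reflection_subgroup_of_G7_def by blast
  then interpret finite_matrix_group G
    using finite_matrix_group_gen_grp_G7[of R] by blast
  have "hurwitz_classified_at G k" for k
  proof (induction k)
    case (Suc k)
    show ?case
    proof (cases "Suc k \<le> m")
      case True
      then show ?thesis
        using assms(5) by simp
    next
      case False
      then show ?thesis
        using assms(2-4) Suc.IH by (intro hurwitz_classified_at_Suc) auto
    qed
  qed (rule hurwitz_classified_at_0)
  then show ?thesis
    by blast
qed

end
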